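(* For every integer $n\ge 0$, \[ \sum_{k=0}^{n}(-4)^k\frac{\binom{n}{k}}{\binom{2k}{k}}\,k^2H_{2k} =\frac{n(2n+1)\{2H_{2n}-H_n\}}{(2n-1)(2n-3)(2n-5)}-\frac{n(96n^4-280n^3+60n^2+182n-13)}{(2n-1)^2(2n-3)^2(2n-5)^2}. \]
   Context: For an integer $m\ge 0$, $H_m$ denotes the $m$-th harmonic number: $H_0=0$ and $H_m=\sum_{j=1}^m \frac1j$ for $m\ge1$. $\binom{n}{k}$ is the usual binomial coefficient. *)

theory Defs
  imports "HOL-Analysis.Analysis"
begin

end

theory Submission
  imports Defs
begin

text \<open>
  Put t(k) = (-4)^k C(n,k) / C(2k,k). Because (2k+1) t(k+1) = -2(n-k) t(k) and t(n+1) = 0, the sum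
  over k of t(k) (-2(n-k) g(k+1) - (2k-1) g(k)) telescopes to g(0) for every g. With g = 1, k, k^2
  this evaluates the moments of t; with g(k) = f(k) H(2k), for the quadratic f that makes the bracket
  equal to (5-2n)(3-2n)(1-2n) k^2, it reduces the harmonic sum to these moments and to the sum of
  t(k)/k over 1 \<le> k \<le> n, which is H(n) - 2 H(2n) by induction on n via Pascal's rule.
\<close>

definition central_ratio :: "nat \<Rightarrow> nat \<Rightarrow> real" where
  "central_ratio n k = (-4)^k * (real (n choose k) / real ((2*k) choose k))"

lemma central_ratio_0 [simp]: "central_ratio n 0 = 1"
  by (simp add: central_ratio_def)

lemma central_ratio_eq_0 [simp]: "n < k \<Longrightarrow> central_ratio n k = 0"
  by (simp add: central_ratio_def)

lemma Suc_times_central_binomial: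
  "Suc k * (2 * Suc k choose Suc k) = 2 * (2 * k + 1) * (2 * k choose k)"
proof -
  have "2 * Suc k choose Suc k = 2 * (Suc (2 * k) choose Suc k)"
    using binomial_symmetric[of k "Suc (2 * k)"] by simp
  then have "Suc k * (2 * Suc k choose Suc k) = 2 * (Suc k * (Suc (2 * k) choose Suc k))"
    by (simp only: mult.left_commute)
  also have "Suc k * (Suc (2 * k) choose Suc k) = Suc (2 * k) * (2 * k choose k)"
    by (rule Suc_times_binomial)
  finally show ?thesis by simp
qed

lemma central_ratio_Suc:
  "(2 * real k + 1) * central_ratio n (Suc k) = -2 * (real n - real k) * central_ratio n k"
proof -
  have ratio: "(2 * real k + 1) * ((-4)^Suc k * (b' / c')) = -2 * (real n - real k) * ((-4)^k * (b / c))"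
    if "real (Suc k) * b' = (real n - real k) * b" "real (Suc k) * c' = 2 * (2 * real k + 1) * c"
      and "c \<noteq> 0" "c' \<noteq> 0" for b b' c c' :: real
  proof -
    have k_term: "2 * real k + 1 \<noteq> 0" by linarith
    then have quotient: "b' / c' = (real n - real k) / (2 * (2 * real k + 1)) * (b / c)"
      using that by (simp add: frac_eq_eq) (metis mult.commute mult.left_commute)
    have "(2 * real k + 1) * ((-4)^Suc k * (b' / c'))
        = -4 * ((2 * real k + 1) * ((real n - real k) / (2 * (2 * real k + 1)))) * ((-4)^k * (b / c))"
      unfolding power_Suc quotient by (simp only: mult_ac)
    also have "(2 * real k + 1) * ((real n - real k) / (2 * (2 * real k + 1))) = (real n - real k) / 2"
      using k_term by (simp add: divide_simps)
    also have "-4 * ((real n - real k) / 2) * ((-4)^k * (b / c)) = -2 * (real n - real k) * ((-4)^k * (b / c))"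
      by linarith
    finally show ?thesis .
  qed
  have "real (Suc k) * real (n choose Suc k) = (real n - real k) * real (n choose k)"
  proof (cases "k \<le> n")
    case True
    then show ?thesis
      using binomial_absorption[of k n] binomial_absorb_comp[of n k] by (metis of_nat_diff of_nat_mult)
  qed (simp add: binomial_eq_0)
  moreover have "real (Suc k) * real (2 * Suc k choose Suc k) = 2 * (2 * real k + 1) * real (2 * k choose k)"
  proof -
    have "real (Suc k) * real (2 * Suc k choose Suc k) = real (2 * (2 * k + 1)) * real (2 * k choose k)"
      by (simp only: of_nat_mult [symmetric] Suc_times_central_binomial)
    then show ?thesis by simp
  qed
  moreover have "real (2 * k choose k) \<noteq> 0" "real (2 * Suc k choose Suc k) \<noteq> 0"
    by (simp_all del: mult_Suc_right)
  ultimately show ?thesis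
    unfolding central_ratio_def by (rule ratio)
qed

lemma sum_central_ratio_telescope:
  "(\<Sum>k=0..n. central_ratio n k * (-2 * (real n - real k) * g (Suc k) - (2 * real k - 1) * g k)) = g 0"
proof -
  define G where "G k = (2 * real k - 1) * central_ratio n k * g k" for k
  have "(\<Sum>k=0..n. central_ratio n k * (-2 * (real n - real k) * g (Suc k) - (2 * real k - 1) * g k))
      = (\<Sum>k=0..n. G (Suc k) - G k)"
  proof (rule sum.cong [OF refl])
    fix k
    have "G (Suc k) = (2 * real k + 1) * central_ratio n (Suc k) * g (Suc k)"
      by (simp add: G_def)
    then have "G (Suc k) = -2 * (real n - real k) * central_ratio n k * g (Suc k)"
      by (simp only: central_ratio_Suc)
    then show "central_ratio n k * (-2 * (real n - real k) * g (Suc k) - (2 * real k - 1) * g k)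
        = G (Suc k) - G k"
      by (simp add: G_def algebra_simps)
  qed
  also have "\<dots> = G (Suc n) - G 0"
    by (rule sum_Suc_diff) simp
  also have "\<dots> = g 0"
    by (simp add: G_def)
  finally show ?thesis .
qed

lemma harm_double_Suc_weight:
  "(2 * real k + 1) * (harm (2 * Suc k) - harm (2 * k)) = (4 * real (Suc k) - 1) / (2 * real (Suc k))"
proof -
  have "2 * Suc k = Suc (Suc (2 * k))" by simp
  then have "harm (2 * Suc k) - harm (2 * k) = 1 / (2 * real k + 1) + (1 / (2 * real k + 2) :: real)"
    by (simp add: harm_Suc inverse_eq_divide add_ac)
  moreover have "2 * real k + 1 \<noteq> 0" "2 * real k + 2 \<noteq> 0" by linarith+
  ultimately show ?thesis by (simp add: divide_simps) (simp add: algebra_simps)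
qed

lemma sum_central_ratio_harm_telescope:
  "(\<Sum>k=0..n. central_ratio n k * (-2 * (real n - real k) * f (Suc k) - (2 * real k - 1) * f k) * harm (2 * k))
    = - (\<Sum>k=1..n. central_ratio n k * f k * (4 * real k - 1) / (2 * real k))"
proof -
  have step: "central_ratio n k * (-2 * (real n - real k) * (f (Suc k) * harm (2 * Suc k)) - (2 * real k - 1) * (f k * harm (2 * k)))
      = central_ratio n k * (-2 * (real n - real k) * f (Suc k) - (2 * real k - 1) * f k) * harm (2 * k)
        + central_ratio n (Suc k) * f (Suc k) * (4 * real (Suc k) - 1) / (2 * real (Suc k))" for k
  proof -
    have "-2 * (real n - real k) * central_ratio n k * f (Suc k) * (harm (2 * Suc k) - harm (2 * k))
        = (2 * real k + 1) * central_ratio n (Suc k) * f (Suc k) * (harm (2 * Suc k) - harm (2 * k))"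
      by (simp only: central_ratio_Suc)
    also have "\<dots> = central_ratio n (Suc k) * f (Suc k) * ((2 * real k + 1) * (harm (2 * Suc k) - harm (2 * k)))"
      by (simp only: mult_ac)
    also have "\<dots> = central_ratio n (Suc k) * f (Suc k) * (4 * real (Suc k) - 1) / (2 * real (Suc k))"
      by (simp only: harm_double_Suc_weight times_divide_eq_right)
    finally show ?thesis
      by (simp add: algebra_simps)
  qed
  have "0 = (\<Sum>k=0..n. central_ratio n k * (-2 * (real n - real k) * (f (Suc k) * harm (2 * Suc k)) - (2 * real k - 1) * (f k * harm (2 * k))))"
    using sum_central_ratio_telescope [of n "\<lambda>k. f k * harm (2 * k)"] by (simp add: harm_def)
  also have "\<dots> = (\<Sum>k=0..n. central_ratio n k * (-2 * (real n - real k) * f (Suc k) - (2 * real k - 1) * f k) * harm (2 * k))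
      + (\<Sum>k=0..n. central_ratio n (Suc k) * f (Suc k) * (4 * real (Suc k) - 1) / (2 * real (Suc k)))"
    by (simp only: step sum.distrib)
  also have "(\<Sum>k=0..n. central_ratio n (Suc k) * f (Suc k) * (4 * real (Suc k) - 1) / (2 * real (Suc k)))
      = (\<Sum>k=1..Suc n. central_ratio n k * f k * (4 * real k - 1) / (2 * real k))"
    unfolding One_nat_def sum.shift_bounds_cl_Suc_ivl ..
  also have "\<dots> = (\<Sum>k=1..n. central_ratio n k * f k * (4 * real k - 1) / (2 * real k))"
    by simp
  finally show ?thesis by linarith
qed

lemma odd_minus_double_of_nat_neq_0:
  "1 - 2 * real n \<noteq> 0" "3 - 2 * real n \<noteq> 0" "5 - 2 * real n \<noteq> 0"
proof -
  have "real m - 2 * real n \<noteq> 0" if "odd m" for m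
  proof
    assume "real m - 2 * real n = 0"
    then have "m = 2 * n" by linarith
    with that show False by simp
  qed
  from this [of 1] this [of 3] this [of 5]
  show "1 - 2 * real n \<noteq> 0" "3 - 2 * real n \<noteq> 0" "5 - 2 * real n \<noteq> 0" by simp_all
qed

lemma sum_mult_quadratic:
  "(\<Sum>k\<in>A. w k * (a * real k ^ 2 + b * real k + c))
    = a * (\<Sum>k\<in>A. w k * real k ^ 2) + b * (\<Sum>k\<in>A. w k * real k) + c * sum w A"
  by (simp add: sum.distrib sum_distrib_left algebra_simps)

lemma sum_central_ratio: "(\<Sum>k=0..n. central_ratio n k) = 1 / (1 - 2 * real n)"
proof -
  have "(\<Sum>k=0..n. central_ratio n k * (0 * real k ^ 2 + 0 * real k + (1 - 2 * real n))) = 1"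
    using sum_central_ratio_telescope [of n "\<lambda>_. 1"] by (simp add: algebra_simps)
  moreover note odd_minus_double_of_nat_neq_0
  ultimately show ?thesis
    unfolding sum_mult_quadratic by (simp add: field_simps)
qed

lemma sum_central_ratio_mult_id:
  "(\<Sum>k=0..n. central_ratio n k * real k) = 2 * real n / ((1 - 2 * real n) * (3 - 2 * real n))"
proof -
  have "(\<Sum>k=0..n. central_ratio n k * (0 * real k ^ 2 + (3 - 2 * real n) * real k - 2 * real n)) = 0"
    using sum_central_ratio_telescope [of n real] by (simp add: algebra_simps)
  moreover note odd_minus_double_of_nat_neq_0
  ultimately show ?thesis
    unfolding diff_conv_add_uminus sum_mult_quadratic sum_central_ratio
    by (simp add: divide_simps) (simp add: algebra_simps)
qed

lemma sum_central_ratio_mult_square: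
  "(\<Sum>k=0..n. central_ratio n k * real k ^ 2)
    = 2 * real n * (2 * real n + 1) / ((1 - 2 * real n) * (3 - 2 * real n) * (5 - 2 * real n))"
proof -
  have "(\<Sum>k=0..n. central_ratio n k * ((5 - 2 * real n) * real k ^ 2 + (2 - 4 * real n) * real k - 2 * real n)) = 0"
    using sum_central_ratio_telescope [of n "\<lambda>k. real k ^ 2"] by (simp add: algebra_simps power2_eq_square)
  moreover note odd_minus_double_of_nat_neq_0
  ultimately show ?thesis
    unfolding diff_conv_add_uminus sum_mult_quadratic sum_central_ratio sum_central_ratio_mult_id
    by (simp add: divide_simps) (simp add: algebra_simps)
qed

lemma central_ratio_Suc_left:
  assumes "0 < k"
  shows "central_ratio (Suc n) k / real k = central_ratio n k / real k + central_ratio (Suc n) k / real (Suc n)"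
proof -
  obtain j where k: "k = Suc j" using assms gr0_conv_Suc by blast
  define r where "r = (-4)^k / real (2 * k choose k)"
  have central_ratio_eq: "central_ratio m k = r * real (m choose k)" for m
    by (simp add: central_ratio_def r_def)
  have "real (Suc n choose k) / real k = real (n choose k) / real k + real (n choose j) / real k"
    by (simp add: k add_divide_distrib)
  also have "real (n choose j) / real k = real (Suc n) * real (n choose j) / (real (Suc n) * real k)"
    by simp
  also have "real (Suc n) * real (n choose j) = real k * real (Suc n choose k)"
    unfolding k by (metis Suc_times_binomial of_nat_mult)
  also have "real k * real (Suc n choose k) / (real (Suc n) * real k) = real (Suc n choose k) / real (Suc n)"
    using assms by simp
  finally show ?thesis
    unfolding central_ratio_eq by (simp add: ring_distribs flip: times_divide_eq_right)
qed

lemma sum_central_ratio_div: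
  "(\<Sum>k=1..n. central_ratio n k / real k) = harm n - 2 * harm (2 * n)"
proof (induction n)
  case 0
  then show ?case by (simp add: harm_def)
next
  case (Suc n)
  have "(\<Sum>k=1..Suc n. central_ratio (Suc n) k / real k)
      = (\<Sum>k=1..Suc n. central_ratio n k / real k + central_ratio (Suc n) k / real (Suc n))"
    by (rule sum.cong) (simp_all add: central_ratio_Suc_left)
  also have "\<dots> = (\<Sum>k=1..Suc n. central_ratio n k / real k) + (\<Sum>k=1..Suc n. central_ratio (Suc n) k) / real (Suc n)"
    by (simp only: sum.distrib sum_divide_distrib)
  also have "(\<Sum>k=1..Suc n. central_ratio n k / real k) = harm n - 2 * harm (2 * n)"
    using Suc.IH by simp
  also have "(\<Sum>k=1..Suc n. central_ratio (Suc n) k) = 1 / (1 - 2 * real (Suc n)) - 1"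
    using sum_central_ratio [of "Suc n"] by (simp add: sum.atLeast_Suc_atMost)
  also have "(1 / (1 - 2 * real (Suc n)) - 1) / real (Suc n)
      = 1 / (real n + 1) - 2 * (1 / (2 * real n + 1) + 1 / (2 * real n + 2))"
  proof -
    have "2 * real n + 1 \<noteq> 0" "real n + 1 \<noteq> 0" by linarith+
    then show ?thesis by (simp add: divide_simps) (simp add: algebra_simps)
  qed
  also have "harm n - 2 * harm (2 * n) + (1 / (real n + 1) - 2 * (1 / (2 * real n + 1) + 1 / (2 * real n + 2)))
      = harm (Suc n) - 2 * harm (2 * Suc n)"
  proof -
    have "2 * Suc n = Suc (Suc (2 * n))" by simp
    then show ?thesis by (simp add: harm_Suc inverse_eq_divide add_ac)
  qed
  finally show ?case .
qed

lemma sum_central_ratio_square_harm: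
  fixes n :: nat
  defines "x \<equiv> real n"
  shows "(5 - 2 * x) * (3 - 2 * x) * (1 - 2 * x) * (\<Sum>k=0..n. central_ratio n k * real k ^ 2 * harm (2 * k))
    = x * (2 * x + 1) * (harm n - 2 * harm (2 * n))
      - (\<Sum>k=1..n. central_ratio n k * ((8 * x^2 - 16 * x + 6) * real k ^ 2
            + (40 * x - 36 * x^2 - 11) / 2 * real k + (12 * x^2 + 1)))"
proof -
  define f where "f k = (3 - 2 * x) * (1 - 2 * x) * real k ^ 2 - 2 * (1 - 2 * x)^2 * real k + 2 * x * (2 * x + 1)" for k
  have "(5 - 2 * x) * (3 - 2 * x) * (1 - 2 * x) * (\<Sum>k=0..n. central_ratio n k * real k ^ 2 * harm (2 * k))
      = (\<Sum>k=0..n. central_ratio n k * (-2 * (real n - real k) * f (Suc k) - (2 * real k - 1) * f k) * harm (2 * k))"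
    unfolding sum_distrib_left
    by (rule sum.cong) (simp_all add: f_def x_def algebra_simps power2_eq_square)
  also have "\<dots> = - (\<Sum>k=1..n. central_ratio n k * f k * (4 * real k - 1) / (2 * real k))"
    by (rule sum_central_ratio_harm_telescope)
  also have "\<dots> = x * (2 * x + 1) * (\<Sum>k=1..n. central_ratio n k / real k)
      - (\<Sum>k=1..n. central_ratio n k * ((8 * x^2 - 16 * x + 6) * real k ^ 2
            + (40 * x - 36 * x^2 - 11) / 2 * real k + (12 * x^2 + 1)))"
    unfolding sum_distrib_left sum_subtractf [symmetric] sum_negf [symmetric]
    by (rule sum.cong) (simp_all add: f_def divide_simps, simp add: algebra_simps power2_eq_square)
  finally show ?thesis
    by (simp only: sum_central_ratio_div)
qed

lemma sum_central_ratio_remainder: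
  fixes n :: nat
  defines "x \<equiv> real n"
  shows "(\<Sum>k=1..n. central_ratio n k * ((8 * x^2 - 16 * x + 6) * real k ^ 2
            + (40 * x - 36 * x^2 - 11) / 2 * real k + (12 * x^2 + 1)))
    = 4 * x * (2 * x + 1) / (5 - 2 * x) - x * (11 - 18 * x) / (3 - 2 * x) + 2 * x * (12 * x^2 + 1) / (1 - 2 * x)"
proof -
  let ?q = "\<lambda>k. (8 * x^2 - 16 * x + 6) * real k ^ 2 + (40 * x - 36 * x^2 - 11) / 2 * real k + (12 * x^2 + 1)"
  have "(\<Sum>k=0..n. central_ratio n k * ?q k) = central_ratio n 0 * ?q 0 + (\<Sum>k=1..n. central_ratio n k * ?q k)"
    unfolding One_nat_def by (rule sum.atLeast_Suc_atMost) simp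
  moreover have "(\<Sum>k=0..n. central_ratio n k * ?q k)
      = (8 * x^2 - 16 * x + 6) * (2 * x * (2 * x + 1) / ((1 - 2 * x) * (3 - 2 * x) * (5 - 2 * x)))
        + (40 * x - 36 * x^2 - 11) / 2 * (2 * x / ((1 - 2 * x) * (3 - 2 * x))) + (12 * x^2 + 1) * (1 / (1 - 2 * x))"
    unfolding sum_mult_quadratic sum_central_ratio sum_central_ratio_mult_id sum_central_ratio_mult_square x_def ..
  moreover note odd_minus_double_of_nat_neq_0 [of n, folded x_def]
  ultimately show ?thesis
    by (simp add: divide_simps) (simp add: algebra_simps power2_eq_square power3_eq_cube)
qed

theorem theorem3:
  fixes n :: nat
  shows "(\<Sum>k=0..n. (-4::real)^k * (real (n choose k) / real ((2*k) choose k))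
            * (real k)^2 * harm (2*k))
       = real n * (2*real n + 1) * (2 * harm (2*n) - harm n)
           / ((2*real n - 1) * (2*real n - 3) * (2*real n - 5))
         - real n * (96*real n^4 - 280*real n^3 + 60*real n^2 + 182*real n - 13)
           / ((2*real n - 1)^2 * (2*real n - 3)^2 * (2*real n - 5)^2)"
proof -
  define x where "x = real n"
  define S where "S = (\<Sum>k=0..n. central_ratio n k * real k ^ 2 * harm (2 * k))"
  define D where "D = (5 - 2 * x) * (3 - 2 * x) * (1 - 2 * x)"
  define r where "r = 4 * x * (2 * x + 1) / (5 - 2 * x) - x * (11 - 18 * x) / (3 - 2 * x) + 2 * x * (12 * x^2 + 1) / (1 - 2 * x)"
  note nonzero = odd_minus_double_of_nat_neq_0 [of n, folded x_def]
  then have "D \<noteq> 0" by (simp add: D_def)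
  have "D * S = x * (2 * x + 1) * (harm n - 2 * harm (2 * n)) - r"
    using sum_central_ratio_square_harm [of n] unfolding sum_central_ratio_remainder S_def D_def r_def x_def .
  then have "S = x * (2 * x + 1) * (harm n - 2 * harm (2 * n)) / D - r / D"
    using \<open>D \<noteq> 0\<close> by (metis nonzero_mult_div_cancel_left diff_divide_distrib)
  also have "x * (2 * x + 1) * (harm n - 2 * harm (2 * n)) / D
      = x * (2 * x + 1) * (2 * harm (2 * n) - harm n) / ((2 * x - 1) * (2 * x - 3) * (2 * x - 5))"
    unfolding D_def by (simp add: divide_simps) (simp add: algebra_simps)
  also have "r / D = x * (96 * x^4 - 280 * x^3 + 60 * x^2 + 182 * x - 13) / ((2 * x - 1)^2 * (2 * x - 3)^2 * (2 * x - 5)^2)"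
    unfolding r_def D_def using nonzero
    by (simp add: divide_simps) (simp add: algebra_simps power2_eq_square power3_eq_cube power4_eq_xxxx)
  finally show ?thesis
    unfolding S_def x_def central_ratio_def .
qed

end
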